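(* Let $n,k$ be integers with $0<k\le n$, and let $f_j(\Delta'_{n,k})$ denote the number of $j$-dimensional faces of the half-open hypersimplex $\Delta'_{n,k}$. Then $f_0(\Delta'_{n,k})=\binom{n}{k}$, and for $j=1,2,\ldots,n$, $$ f_j(\Delta'_{n,k})=\binom{n+1}{j+1}\sum_{s=\max\{0,k-j\}}^{k-1}\binom{n-j}{s}\frac{n-s+1}{n+1}. $$
   Context: For integers $0<k\le n$, the (slab) hypersimplex is $\Delta_{n,k}=\{(x_1,\ldots,x_n)\in[0,1]^n : k-1\le x_1+\cdots+x_n\le k\}$, a convex polytope in $\mathbb{R}^n$, and the half-open hypersimplex is $\Delta'_{n,k}=\{(x_1,\ldots,x_n)\in[0,1]^n : k-1< x_1+\cdots+x_n\le k\}$, i.e. $\Delta_{n,k}$ with its intersection with the hyperplane $x_1+\cdots+x_n=k-1$ removed. A $j$-face of $\Delta'_{n,k}$ is a set $F\cap\Delta'_{n,k}$ where $F$ is a $j$-dimensional face of the polytope $\Delta_{n,k}$ with $F\cap\Delta'_{n,k}\neq\emptyset$; $f_j(\Delta'_{n,k})$ is the number of such faces. Binomial coefficients $\binom{a}{b}$ are $0$ when $b>a$. *)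

theory Defs
  imports "HOL-Analysis.Analysis"
begin

text \<open>The (slab) hypersimplex in R^n, with n = CARD('n).\<close>
definition hypersimplex :: "nat \<Rightarrow> (real ^ 'n) set" where
  "hypersimplex k = {x. (\<forall>i. 0 \<le> x $ i \<and> x $ i \<le> 1) \<and>
      real k - 1 \<le> (\<Sum>i\<in>UNIV. x $ i) \<and> (\<Sum>i\<in>UNIV. x $ i) \<le> real k}"

definition half_open_hypersimplex :: "nat \<Rightarrow> (real ^ 'n) set" where
  "half_open_hypersimplex k = {x. (\<forall>i. 0 \<le> x $ i \<and> x $ i \<le> 1) \<and>
      real k - 1 < (\<Sum>i\<in>UNIV. x $ i) \<and> (\<Sum>i\<in>UNIV. x $ i) \<le> real k}"

definition half_open_faces :: "nat \<Rightarrow> nat \<Rightarrow> (real ^ 'n) set set" where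
  "half_open_faces k j = {F \<inter> half_open_hypersimplex k | F.
      F face_of (hypersimplex k :: (real ^ 'n) set) \<and> aff_dim F = int j \<and>
      F \<inter> half_open_hypersimplex k \<noteq> {}}"

end

(*
  A polyhedron given by finitely many linear inequalities has as nonempty faces exactly the sets
  on which the constraints active at one of their points hold with equality, and such a face has
  the dimension of the null space of those active normals.  At a point of the half-open
  hypersimplex the active constraints are read off from the coordinates equal to 1 (a set A), the
  fractional coordinates (a set U) and whether the coordinate sum is k.  Hence the j-faces of the
  half-open hypersimplex other than vertices correspond to disjoint pairs (A, U) with
  |A| < k <= |A| + |U| and |U| = j (sum below k), or |A| < k < |A| + |U| and |U| = j + 1
  (sum equal to k), while the vertices are the k-subsets A.  Counting these pairs and using
  C(n,j) C(n-j,m) + C(n,j+1) C(n-j-1,m) = C(n+1,j+1) C(n-j,m) (n+1-m) / (n+1) gives the formula.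
*)

theory Submission
  imports Defs
begin

section \<open>Faces of polyhedra given by linear inequalities\<close>

definition polyhedron_of :: "('c::finite \<Rightarrow> 'a::euclidean_space) \<Rightarrow> ('c \<Rightarrow> real) \<Rightarrow> 'a set" where
  "polyhedron_of a b = {x. \<forall>c. b c \<le> a c \<bullet> x}"

definition active_constraints :: "('c \<Rightarrow> 'a::real_inner) \<Rightarrow> ('c \<Rightarrow> real) \<Rightarrow> 'a \<Rightarrow> 'c set" where
  "active_constraints a b x = {c. a c \<bullet> x = b c}"

definition constraint_face :: "('c::finite \<Rightarrow> 'a::euclidean_space) \<Rightarrow> ('c \<Rightarrow> real) \<Rightarrow> 'c set \<Rightarrow> 'a set" where
  "constraint_face a b T = {x \<in> polyhedron_of a b. \<forall>c\<in>T. a c \<bullet> x = b c}"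

definition constraint_nullspace :: "('c \<Rightarrow> 'a::real_inner) \<Rightarrow> 'c set \<Rightarrow> 'a set" where
  "constraint_nullspace a T = {v. \<forall>c\<in>T. a c \<bullet> v = 0}"

lemma convex_polyhedron_of: "convex (polyhedron_of a b)"
proof -
  have "polyhedron_of a b = (\<Inter>c. {x. b c \<le> a c \<bullet> x})"
    by (auto simp: polyhedron_of_def)
  then show ?thesis
    by (simp add: convex_INT convex_halfspace_ge)
qed

lemma subspace_constraint_nullspace: "subspace (constraint_nullspace a T)"
  by (auto simp: subspace_def constraint_nullspace_def inner_add_right)

lemma constraint_face_face_of: "constraint_face a b T face_of polyhedron_of a b"
proof -
  let ?P = "polyhedron_of a b"
  have "constraint_face a b T = \<Inter> (insert ?P ((\<lambda>c. ?P \<inter> {x. a c \<bullet> x = b c}) ` T))"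
    by (auto simp: constraint_face_def)
  also have "\<dots> face_of ?P"
  proof (rule face_of_Inter)
    fix S assume "S \<in> insert ?P ((\<lambda>c. ?P \<inter> {x. a c \<bullet> x = b c}) ` T)"
    moreover have "?P \<inter> {x. a c \<bullet> x = b c} face_of ?P" for c
      by (rule face_of_Int_supporting_hyperplane_ge[OF convex_polyhedron_of])
        (simp add: polyhedron_of_def)
    ultimately show "S face_of ?P"
      using convex_polyhedron_of face_of_refl by blast
  qed auto
  finally show ?thesis .
qed

lemma mem_constraint_face_active:
  "q \<in> polyhedron_of a b \<Longrightarrow> q \<in> constraint_face a b (active_constraints a b q)"
  by (simp add: constraint_face_def active_constraints_def)

lemma constraint_face_active_step:
  assumes q: "q \<in> polyhedron_of a b"
    and v: "v \<in> constraint_nullspace a (active_constraints a b q)"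
  shows "\<exists>e>0. q + e *\<^sub>R v \<in> constraint_face a b (active_constraints a b q)"
proof -
  let ?A = "active_constraints a b q"
  have "\<forall>\<^sub>F e in at_right 0. b c \<le> a c \<bullet> (q + e *\<^sub>R v) \<and>
      (c \<in> ?A \<longrightarrow> a c \<bullet> (q + e *\<^sub>R v) = b c)" for c
  proof (cases "c \<in> ?A")
    case True
    then show ?thesis
      using v by (simp add: active_constraints_def constraint_nullspace_def inner_add_right)
  next
    case False
    then have "b c < a c \<bullet> q"
      using q by (auto simp: active_constraints_def polyhedron_of_def less_le)
    moreover have "((\<lambda>e. a c \<bullet> (q + e *\<^sub>R v)) \<longlongrightarrow> a c \<bullet> q) (at_right 0)"
      by (auto intro!: tendsto_eq_intros simp: inner_add_right)
    ultimately have "\<forall>\<^sub>F e in at_right 0. b c < a c \<bullet> (q + e *\<^sub>R v)"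
      by (rule order_tendstoD(1)[rotated])
    then show ?thesis
      using False by (auto elim: eventually_mono)
  qed
  then have "\<forall>\<^sub>F e in at_right 0. \<forall>c. b c \<le> a c \<bullet> (q + e *\<^sub>R v) \<and>
      (c \<in> ?A \<longrightarrow> a c \<bullet> (q + e *\<^sub>R v) = b c)"
    by (rule eventually_all_finite)
  then have "\<forall>\<^sub>F e in at_right 0. 0 < e \<and> q + e *\<^sub>R v \<in> constraint_face a b ?A"
    using eventually_at_right_less[of 0]
    by eventually_elim (auto simp: constraint_face_def polyhedron_of_def)
  then show ?thesis
    using eventually_happens'[OF trivial_limit_at_right_real] by blast
qed

lemma convex_common_strict_point:
  assumes "convex F" "F \<noteq> {}" "finite C"
    and valid: "\<And>x c. x \<in> F \<Longrightarrow> b c \<le> a c \<bullet> x"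
    and strict: "\<And>c. c \<in> C \<Longrightarrow> \<exists>x\<in>F. b c < a c \<bullet> x"
  shows "\<exists>q\<in>F. \<forall>c\<in>C. b c < a c \<bullet> q"
  using \<open>finite C\<close> strict
proof (induction C rule: finite_induct)
  case empty
  then show ?case using \<open>F \<noteq> {}\<close> by auto
next
  case (insert d C)
  have "\<exists>q\<in>F. \<forall>c\<in>C. b c < a c \<bullet> q"
    using insert.prems by (intro insert.IH) auto
  then obtain q where q: "q \<in> F" "\<forall>c\<in>C. b c < a c \<bullet> q"
    by blast
  obtain x where x: "x \<in> F" "b d < a d \<bullet> x"
    using insert.prems by blast
  let ?m = "(1/2) *\<^sub>R q + (1/2) *\<^sub>R x"
  have "?m \<in> F"
    using \<open>convex F\<close> q x by (intro convexD) auto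
  moreover have "b c < a c \<bullet> ?m" if "c \<in> insert d C" for c
  proof -
    have "b c \<le> a c \<bullet> q" "b c \<le> a c \<bullet> x"
      using valid[OF q(1)] valid[OF x(1)] by auto
    moreover have "b c < a c \<bullet> q \<or> b c < a c \<bullet> x"
      using that q(2) x(2) by auto
    ultimately show ?thesis
      by (auto simp: inner_add_right)
  qed
  ultimately show ?case by blast
qed

lemma constraint_face_active_subset_face:
  assumes F: "F face_of polyhedron_of a b" and q: "q \<in> F"
  shows "constraint_face a b (active_constraints a b q) \<subseteq> F"
proof
  fix y assume y: "y \<in> constraint_face a b (active_constraints a b q)"
  show "y \<in> F"
  proof (cases "y = q")
    case True
    then show ?thesis
      using q by simp
  next
    case False
    have qP: "q \<in> polyhedron_of a b"
      using F q face_of_imp_subset by blast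
    have "q - y \<in> constraint_nullspace a (active_constraints a b q)"
      using y by (auto simp: active_constraints_def constraint_face_def
          constraint_nullspace_def inner_diff_right)
    then obtain e where e: "e > 0" "q + e *\<^sub>R (q - y) \<in> constraint_face a b (active_constraints a b q)"
      using constraint_face_active_step[OF qP] by blast
    \<comment> \<open>q lies strictly between y and the point z beyond q, so the face F must contain y\<close>
    define z where "z = q + e *\<^sub>R (q - y)"
    have "y \<noteq> z"
    proof
      assume "y = z"
      then have "(1 + e) *\<^sub>R (q - y) = 0"
        by (simp add: z_def algebra_simps)
      then show False
        using e False by simp
    qed
    define u where "u = 1/(1+e)"
    have "u > 0" "u < 1" "u + u * e = 1"
      using e by (simp_all add: u_def field_simps)
    moreover have "(1 - u) *\<^sub>R y + u *\<^sub>R z = y + (u + u * e) *\<^sub>R (q - y)"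
      by (simp add: z_def algebra_simps)
    ultimately have seg: "q \<in> open_segment y z"
      using \<open>y \<noteq> z\<close> unfolding in_segment by auto
    have "y \<in> polyhedron_of a b" "z \<in> polyhedron_of a b"
      using y e by (auto simp: z_def constraint_face_def)
    then show "y \<in> F"
      using face_ofD[OF F seg _ _ q] by blast
  qed
qed

lemma face_of_polyhedron_of_eq_constraint_face:
  assumes F: "F face_of polyhedron_of a b" "F \<noteq> {}"
  obtains q where "q \<in> F" "F = constraint_face a b (active_constraints a b q)"
proof -
  have sub: "F \<subseteq> polyhedron_of a b"
    using F face_of_imp_subset by blast
  have "\<exists>q\<in>F. \<forall>c\<in>{c. \<exists>x\<in>F. b c < a c \<bullet> x}. b c < a c \<bullet> q"
  proof (rule convex_common_strict_point)
    show "convex F"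
      using F(1) by (rule face_of_imp_convex)
    show "b c \<le> a c \<bullet> x" if "x \<in> F" for x c
      using sub that by (auto simp: polyhedron_of_def)
  qed (use F(2) in auto)
  then obtain q where q: "q \<in> F"
    and strict: "\<And>c x. x \<in> F \<Longrightarrow> b c < a c \<bullet> x \<Longrightarrow> b c < a c \<bullet> q"
    by blast
  have "a c \<bullet> x = b c" if "x \<in> F" "c \<in> active_constraints a b q" for x c
  proof (rule ccontr)
    assume "a c \<bullet> x \<noteq> b c"
    then have "b c < a c \<bullet> x"
      using sub that(1) by (force simp: polyhedron_of_def less_le)
    then have "b c < a c \<bullet> q"
      using strict that(1) by blast
    then show False
      using that(2) by (simp add: active_constraints_def)
  qed
  then have "F \<subseteq> constraint_face a b (active_constraints a b q)"
    using sub by (auto simp: constraint_face_def)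
  then have "F = constraint_face a b (active_constraints a b q)"
    using constraint_face_active_subset_face[OF F(1) q] by (rule subset_antisym)
  with q show ?thesis
    by (rule that)
qed

lemma aff_dim_constraint_face:
  assumes q: "q \<in> polyhedron_of a b"
  shows "aff_dim (constraint_face a b (active_constraints a b q))
    = int (dim (constraint_nullspace a (active_constraints a b q)))"
proof -
  let ?T = "active_constraints a b q"
  let ?S = "constraint_face a b ?T"
  let ?L = "constraint_nullspace a ?T"
  have "q \<in> affine hull ?S"
    using mem_constraint_face_active[OF q] by (rule hull_inc)
  then have aff: "aff_dim ?S = int (dim ((+) (- q) ` ?S))"
    by (rule aff_dim_eq_dim)
  have "(+) (- q) ` ?S \<subseteq> ?L"
    by (auto simp: constraint_nullspace_def constraint_face_def active_constraints_def
        inner_diff_right)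
  then have "span ((+) (- q) ` ?S) \<subseteq> ?L"
    using subspace_constraint_nullspace by (rule span_minimal)
  moreover have "?L \<subseteq> span ((+) (- q) ` ?S)"
  proof
    fix v assume "v \<in> ?L"
    then obtain e where e: "e > 0" "q + e *\<^sub>R v \<in> ?S"
      using constraint_face_active_step[OF q] by blast
    then have "e *\<^sub>R v \<in> (+) (- q) ` ?S"
      by (force intro: image_eqI[where x="q + e *\<^sub>R v"])
    then have "(1/e) *\<^sub>R (e *\<^sub>R v) \<in> span ((+) (- q) ` ?S)"
      by (intro span_mul span_base)
    then show "v \<in> span ((+) (- q) ` ?S)"
      using e by simp
  qed
  ultimately have "span ((+) (- q) ` ?S) = ?L"
    by (rule subset_antisym)
  then show ?thesis
    using aff by (metis dim_span)
qed

section \<open>The hypersimplex as such a polyhedron\<close>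

datatype 'n hypersimplex_constraint =
  Coord_nonneg 'n | Coord_le_one 'n | Sum_lower | Sum_upper

lemma UNIV_hypersimplex_constraint:
  "UNIV = range Coord_nonneg \<union> range Coord_le_one \<union> {Sum_lower, Sum_upper}"
proof -
  have "c \<in> range Coord_nonneg \<union> range Coord_le_one \<union> {Sum_lower, Sum_upper}"
    for c :: "'n hypersimplex_constraint"
    by (cases c) auto
  then show ?thesis
    by blast
qed

instance hypersimplex_constraint :: (finite) finite
  by standard (simp add: UNIV_hypersimplex_constraint)

lemma all_hypersimplex_constraint:
  "(\<forall>c. P c) \<longleftrightarrow> (\<forall>i. P (Coord_nonneg i)) \<and> (\<forall>i. P (Coord_le_one i)) \<and> P Sum_lower \<and> P Sum_upper"
  by (metis hypersimplex_constraint.exhaust)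

primrec hypersimplex_normal :: "'n::finite hypersimplex_constraint \<Rightarrow> real ^ 'n" where
  "hypersimplex_normal (Coord_nonneg i) = axis i 1"
| "hypersimplex_normal (Coord_le_one i) = - axis i 1"
| "hypersimplex_normal Sum_lower = (\<chi> i. 1)"
| "hypersimplex_normal Sum_upper = - (\<chi> i. 1)"

primrec hypersimplex_bound :: "nat \<Rightarrow> 'n hypersimplex_constraint \<Rightarrow> real" where
  "hypersimplex_bound k (Coord_nonneg i) = 0"
| "hypersimplex_bound k (Coord_le_one i) = -1"
| "hypersimplex_bound k Sum_lower = real k - 1"
| "hypersimplex_bound k Sum_upper = - real k"

lemma inner_hypersimplex_normal [simp]:
  "hypersimplex_normal (Coord_nonneg i) \<bullet> x = x $ i"
  "hypersimplex_normal (Coord_le_one i) \<bullet> x = - x $ i"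
  "hypersimplex_normal Sum_lower \<bullet> x = (\<Sum>i\<in>UNIV. x $ i)"
  "hypersimplex_normal Sum_upper \<bullet> x = - (\<Sum>i\<in>UNIV. x $ i)"
  by (simp_all add: inner_axis') (simp_all add: inner_vec_def sum_negf)

declare hypersimplex_normal.simps [simp del]

abbreviation hs_face :: "nat \<Rightarrow> 'n::finite hypersimplex_constraint set \<Rightarrow> (real ^ 'n) set" where
  "hs_face k \<equiv> constraint_face hypersimplex_normal (hypersimplex_bound k)"

abbreviation hs_active :: "nat \<Rightarrow> real ^ 'n::finite \<Rightarrow> 'n hypersimplex_constraint set" where
  "hs_active k \<equiv> active_constraints hypersimplex_normal (hypersimplex_bound k)"

lemma hypersimplex_eq_polyhedron_of:
  "hypersimplex k = polyhedron_of hypersimplex_normal (hypersimplex_bound k)"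
  unfolding hypersimplex_def polyhedron_of_def all_hypersimplex_constraint by auto

lemma half_open_hypersimplex_eq:
  "half_open_hypersimplex k = {x \<in> hypersimplex k. Sum_lower \<notin> hs_active k x}"
  by (auto simp: half_open_hypersimplex_def hypersimplex_def active_constraints_def less_le)

definition face_constraints :: "'n set \<Rightarrow> 'n set \<Rightarrow> bool \<Rightarrow> 'n hypersimplex_constraint set" where
  "face_constraints A U s =
    Coord_nonneg ` (- (A \<union> U)) \<union> Coord_le_one ` A \<union> (if s then {Sum_upper} else {})"

lemma mem_face_constraints [simp]:
  "Coord_nonneg i \<in> face_constraints A U s \<longleftrightarrow> i \<notin> A \<and> i \<notin> U"
  "Coord_le_one i \<in> face_constraints A U s \<longleftrightarrow> i \<in> A"
  "Sum_lower \<notin> face_constraints A U s"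
  "Sum_upper \<in> face_constraints A U s \<longleftrightarrow> s"
  by (auto simp: face_constraints_def)

lemma face_constraints_inj:
  assumes "A \<inter> U = {}" "A' \<inter> U' = {}" "face_constraints A U s = face_constraints A' U' s'"
  shows "A = A' \<and> U = U' \<and> s = s'"
proof -
  have mem: "c \<in> face_constraints A U s \<longleftrightarrow> c \<in> face_constraints A' U' s'" for c
    using assms(3) by simp
  have A: "A = A'"
  proof (rule set_eqI)
    show "i \<in> A \<longleftrightarrow> i \<in> A'" for i
      using mem[of "Coord_le_one i"] by simp
  qed
  moreover have "U = U'"
  proof (rule set_eqI)
    show "i \<in> U \<longleftrightarrow> i \<in> U'" for i
      using mem[of "Coord_nonneg i"] A assms(1,2) by auto
  qed
  moreover have "s = s'"
    using mem[of Sum_upper] by simp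
  ultimately show ?thesis
    by blast
qed

definition coords_one :: "real ^ 'n \<Rightarrow> 'n set" where
  "coords_one q = {i. q $ i = 1}"

definition coords_fractional :: "real ^ 'n \<Rightarrow> 'n set" where
  "coords_fractional q = {i. 0 < q $ i \<and> q $ i < 1}"

lemma active_constraints_half_open_hypersimplex:
  assumes "q \<in> half_open_hypersimplex k"
  shows "hs_active k q =
    face_constraints (coords_one q) (coords_fractional q) ((\<Sum>i\<in>UNIV. q $ i) = real k)"
proof (rule set_eqI)
  fix c
  have bounds: "0 \<le> q $ i \<and> q $ i \<le> 1" for i
    using assms by (simp add: half_open_hypersimplex_def)
  have "(\<Sum>i\<in>UNIV. q $ i) \<noteq> real k - 1"
    using assms by (simp add: half_open_hypersimplex_def)
  then show "c \<in> hs_active k q \<longleftrightarrow>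
      c \<in> face_constraints (coords_one q) (coords_fractional q) ((\<Sum>i\<in>UNIV. q $ i) = real k)"
  proof (cases c)
    case (Coord_nonneg i)
    then show ?thesis
      using bounds[of i] by (auto simp: active_constraints_def coords_one_def coords_fractional_def)
  qed (auto simp: active_constraints_def coords_one_def)
qed

lemma sum_coords_split:
  assumes "\<forall>i. 0 \<le> q $ i \<and> q $ i \<le> 1"
  shows "(\<Sum>i\<in>UNIV. q $ i) = real (card (coords_one q)) + (\<Sum>i\<in>coords_fractional q. q $ i)"
proof -
  have "(\<Sum>i\<in>UNIV. q $ i) = (\<Sum>i\<in>coords_one q \<union> coords_fractional q. q $ i)"
    using assms by (intro sum.mono_neutral_right) (auto simp: coords_one_def coords_fractional_def less_le)
  also have "\<dots> = (\<Sum>i\<in>coords_one q. q $ i) + (\<Sum>i\<in>coords_fractional q. q $ i)"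
    by (rule sum.union_disjoint) (auto simp: coords_one_def coords_fractional_def)
  also have "(\<Sum>i\<in>coords_one q. q $ i) = real (card (coords_one q))"
    by (simp add: coords_one_def)
  finally show ?thesis .
qed

text \<open>A triple (A, U, s) encodes the pattern of a point of the half-open hypersimplex: the
  coordinates in A equal 1, those in U lie strictly between 0 and 1, the others vanish, and s says
  whether the coordinate sum equals k. face_type k A U s holds iff the pattern occurs.\<close>

definition face_type :: "nat \<Rightarrow> 'n set \<Rightarrow> 'n set \<Rightarrow> bool \<Rightarrow> bool" where
  "face_type k A U s \<longleftrightarrow> A \<inter> U = {} \<and>
    (if s then (U = {} \<and> card A = k) \<or> (card A < k \<and> k < card A + card U)
     else U \<noteq> {} \<and> card A < k \<and> k \<le> card A + card U)"

lemma face_type_of_point: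
  assumes "q \<in> half_open_hypersimplex k"
  shows "face_type k (coords_one q) (coords_fractional q) ((\<Sum>i\<in>UNIV. q $ i) = real k)"
proof -
  let ?A = "coords_one q" and ?U = "coords_fractional q" and ?r = "\<Sum>i\<in>coords_fractional q. q $ i"
  have sum: "(\<Sum>i\<in>UNIV. q $ i) = real (card ?A) + ?r"
    using assms by (intro sum_coords_split) (simp add: half_open_hypersimplex_def)
  have bounds: "real k - 1 < (\<Sum>i\<in>UNIV. q $ i)" "(\<Sum>i\<in>UNIV. q $ i) \<le> real k"
    using assms by (auto simp: half_open_hypersimplex_def)
  have disj: "?A \<inter> ?U = {}"
    by (auto simp: coords_one_def coords_fractional_def)
  have r_pos: "0 < ?r" if "?U \<noteq> {}"
    using that by (intro sum_pos) (auto simp: coords_fractional_def)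
  have r_less: "?r < real (card ?U)" if "?U \<noteq> {}"
  proof -
    have "?r < (\<Sum>i\<in>?U. 1)"
      using that by (intro sum_strict_mono) (auto simp: coords_fractional_def)
    then show ?thesis
      by simp
  qed
  show ?thesis
  proof (cases "?U = {}")
    case True
    then have "real k - 1 < real (card ?A)" "real (card ?A) \<le> real k"
      using sum bounds by simp_all
    then have "card ?A = k"
      by linarith
    then show ?thesis
      using True disj sum by (simp add: face_type_def)
  next
    case False
    then have "real (card ?A) < real k" "real k < real (card ?A) + real (card ?U) + 1"
      using sum bounds r_pos r_less by linarith+
    moreover have "(\<Sum>i\<in>UNIV. q $ i) = real k \<Longrightarrow> real k < real (card ?A) + real (card ?U)"
      using sum r_less False by linarith
    ultimately show ?thesis
      using False disj by (auto simp: face_type_def)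
  qed
qed

definition face_type_point :: "nat \<Rightarrow> 'n set \<Rightarrow> 'n set \<Rightarrow> bool \<Rightarrow> real ^ 'n" where
  "face_type_point k A U s = (\<chi> i. if i \<in> A then 1 else if i \<in> U then
      (real k - real (card A) - (if s then 0 else 1/2)) / real (card U) else 0)"

lemma face_type_point_fractional:
  assumes "face_type k A U s" "i \<in> U"
  shows "0 < face_type_point k A U s $ i \<and> face_type_point k A U s $ i < 1"
proof -
  have "A \<inter> U = {}" "U \<noteq> {}"
    using assms by (auto simp: face_type_def)
  moreover have "card A < k" "if s then k < card A + card U else k \<le> card A + card U"
    using assms \<open>U \<noteq> {}\<close> by (auto simp: face_type_def split: if_splits)
  then have "0 < real k - real (card A) - (if s then 0 else 1/2)"
    "real k - real (card A) - (if s then 0 else 1/2) < real (card U)"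
    by (auto split: if_splits)
  moreover have "real (card U) > 0"
    using \<open>U \<noteq> {}\<close> by (simp add: card_gt_0_iff)
  ultimately show ?thesis
    using assms(2) by (auto simp: face_type_point_def field_simps)
qed

lemma sum_face_type_point:
  assumes "face_type k A U s"
  shows "(\<Sum>i\<in>UNIV. face_type_point k A U s $ i) = (if s then real k else real k - 1/2)"
proof -
  define t where "t = (real k - real (card A) - (if s then 0 else 1/2)) / real (card U)"
  have "A \<inter> U = {}"
    using assms by (simp add: face_type_def)
  then have "(\<Sum>i\<in>UNIV. face_type_point k A U s $ i)
      = (\<Sum>i\<in>UNIV. (if i \<in> A then 1 else 0) + (if i \<in> U then t else 0))"
    by (intro sum.cong) (auto simp: face_type_point_def t_def)
  also have "\<dots> = real (card A) + real (card U) * t"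
    by (simp add: sum.distrib sum.If_cases)
  also have "\<dots> = (if s then real k else real k - 1/2)"
  proof (cases "U = {}")
    case True
    then show ?thesis
      using assms by (auto simp: face_type_def)
  next
    case False
    then show ?thesis
      by (simp add: t_def)
  qed
  finally show ?thesis .
qed

lemma face_type_point_witness:
  assumes "face_type k A U s"
  shows "face_type_point k A U s \<in> half_open_hypersimplex k"
    and "hs_active k (face_type_point k A U s) = face_constraints A U s"
proof -
  let ?p = "face_type_point k A U s"
  have "A \<inter> U = {}"
    using assms by (simp add: face_type_def)
  have one: "?p $ i = 1" if "i \<in> A" for i
    using that by (simp add: face_type_point_def)
  have zero: "?p $ i = 0" if "i \<notin> A" "i \<notin> U" for i
    using that by (simp add: face_type_point_def)
  note fractional = face_type_point_fractional[OF assms]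
  have "0 \<le> ?p $ i \<and> ?p $ i \<le> 1" for i
    using one zero fractional[of i] by (cases "i \<in> A \<or> i \<in> U") auto
  then show p_mem: "?p \<in> half_open_hypersimplex k"
    using sum_face_type_point[OF assms] by (simp add: half_open_hypersimplex_def)
  have "?p $ i = 1 \<longleftrightarrow> i \<in> A" "0 < ?p $ i \<and> ?p $ i < 1 \<longleftrightarrow> i \<in> U" for i
    using one[of i] zero[of i] fractional[of i] \<open>A \<inter> U = {}\<close>
    by (cases "i \<in> A"; cases "i \<in> U"; auto)+
  then have "coords_one ?p = A" "coords_fractional ?p = U"
    by (auto simp: coords_one_def coords_fractional_def)
  moreover have "(\<Sum>i\<in>UNIV. ?p $ i) = real k \<longleftrightarrow> s"
    using sum_face_type_point[OF assms] by simp
  ultimately show "hs_active k ?p = face_constraints A U s"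
    using active_constraints_half_open_hypersimplex[OF p_mem] by simp
qed

lemma constraint_nullspace_face_constraints:
  assumes "A \<inter> U = {}"
  shows "constraint_nullspace hypersimplex_normal (face_constraints A U s) =
    {v :: real ^ 'n. (\<forall>i. i \<notin> U \<longrightarrow> v $ i = 0) \<and> (s \<longrightarrow> (\<Sum>i\<in>UNIV. v $ i) = 0)}"
    (is "_ = ?V")
proof (intro set_eqI iffI)
  fix v assume "v \<in> constraint_nullspace hypersimplex_normal (face_constraints A U s)"
  then have v: "hypersimplex_normal c \<bullet> v = 0" if "c \<in> face_constraints A U s" for c
    using that by (simp add: constraint_nullspace_def)
  have "v $ i = 0" if "i \<notin> U" for i
    using v[of "Coord_le_one i"] v[of "Coord_nonneg i"] that by (cases "i \<in> A") simp_all
  moreover have "(\<Sum>i\<in>UNIV. v $ i) = 0" if s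
    using v[of Sum_upper] that by simp
  ultimately show "v \<in> ?V"
    by blast
next
  fix v assume "v \<in> ?V"
  then show "v \<in> constraint_nullspace hypersimplex_normal (face_constraints A U s)"
    using assms by (auto simp: constraint_nullspace_def face_constraints_def)
qed

lemma dim_coordinate_subspace: "dim {v :: real ^ 'n. \<forall>i. i \<notin> U \<longrightarrow> v $ i = 0} = card U"
proof -
  have "vec.dim {v :: real ^ 'n. \<forall>i. i \<notin> U \<longrightarrow> v $ i = 0} = card U"
    by (rule dim_substandard_cart)
  then show ?thesis
    by (simp only: dim_vec_eq)
qed

lemma dim_coordinate_subspace_sum_zero:
  assumes "U \<noteq> {}"
  shows "dim {v :: real ^ 'n. (\<forall>i. i \<notin> U \<longrightarrow> v $ i = 0) \<and> (\<Sum>i\<in>UNIV. v $ i) = 0} = card U - 1"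
proof -
  define L0 where "L0 = {v :: real ^ 'n. \<forall>i. i \<notin> U \<longrightarrow> v $ i = 0}"
  define L where "L = {v \<in> L0. (\<Sum>i\<in>UNIV. v $ i) = 0}"
  obtain u where u: "u \<in> U"
    using assms by blast
  let ?e = "axis u 1 :: real ^ 'n"
  have "subspace L0" "subspace L"
    by (auto simp: subspace_def L_def L0_def sum.distrib sum_distrib_left[symmetric])
  then have "span L = L" "span L0 = L0"
    by (simp_all add: span_eq_iff)
  moreover have "?e \<in> L0" "?e \<notin> L"
    using u by (auto simp: L_def L0_def axis_def)
  then have "L \<subset> L0"
    by (auto simp: L_def)
  ultimately have "dim L < dim L0"
    by (metis dim_psubset)
  then have "dim L < card U"
    by (simp add: L0_def dim_coordinate_subspace)
  have "L0 \<subseteq> span (insert ?e L)"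
  proof
    fix v assume v: "v \<in> L0"
    let ?c = "\<Sum>i\<in>UNIV. v $ i"
    have "v - ?c *\<^sub>R ?e \<in> L"
      using v u by (auto simp: L_def L0_def sum_subtractf sum_distrib_left[symmetric] axis_def)
    then have "(v - ?c *\<^sub>R ?e) + ?c *\<^sub>R ?e \<in> span (insert ?e L)"
      by (intro span_add span_mul span_base) auto
    then show "v \<in> span (insert ?e L)"
      by simp
  qed
  then have "dim L0 \<le> dim (insert ?e L)"
    by (rule dim_mono)
  also have "\<dots> \<le> dim L + 1"
    by (simp add: dim_insert)
  finally have "dim L0 \<le> dim L + 1" .
  then show ?thesis
    using \<open>dim L < card U\<close> dim_coordinate_subspace[of U] by (simp add: L_def L0_def)
qed

definition face_type_dim :: "'n set \<Rightarrow> bool \<Rightarrow> nat" where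
  "face_type_dim U s = (if s then card U - 1 else card U)"

lemma dim_constraint_nullspace_face_constraints:
  assumes "A \<inter> U = {}"
  shows "dim (constraint_nullspace hypersimplex_normal (face_constraints A U s)) = face_type_dim U s"
proof (cases "s \<and> U \<noteq> {}")
  case True
  then show ?thesis
    using dim_coordinate_subspace_sum_zero[of U]
    by (simp add: constraint_nullspace_face_constraints[OF assms] face_type_dim_def)
next
  case False
  then have "constraint_nullspace hypersimplex_normal (face_constraints A U s) =
      {v. \<forall>i. i \<notin> U \<longrightarrow> v $ i = 0}"
    by (auto simp: constraint_nullspace_face_constraints[OF assms])
  then show ?thesis
    using False by (auto simp: dim_coordinate_subspace face_type_dim_def)
qed

lemma aff_dim_hs_face:
  assumes "q \<in> half_open_hypersimplex k" "hs_active k q = face_constraints A U s" "A \<inter> U = {}"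
  shows "aff_dim (hs_face k (face_constraints A U s)) = int (face_type_dim U s)"
proof -
  have "q \<in> polyhedron_of hypersimplex_normal (hypersimplex_bound k)"
    using assms(1) by (auto simp: half_open_hypersimplex_eq hypersimplex_eq_polyhedron_of)
  from aff_dim_constraint_face[OF this] show ?thesis
    using assms(2,3) by (simp add: dim_constraint_nullspace_face_constraints)
qed

section \<open>Faces of the half-open hypersimplex\<close>

definition half_open_face :: "nat \<Rightarrow> 'n set \<Rightarrow> 'n set \<Rightarrow> bool \<Rightarrow> (real ^ 'n::finite) set" where
  "half_open_face k A U s = hs_face k (face_constraints A U s) \<inter> half_open_hypersimplex k"

definition face_types :: "nat \<Rightarrow> nat \<Rightarrow> ('n::finite set \<times> 'n set \<times> bool) set" where
  "face_types k j = {(A, U, s). face_type k A U s \<and> face_type_dim U s = j}"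

lemma face_type_point_mem_half_open_face:
  assumes "face_type k A U s"
  shows "face_type_point k A U s \<in> half_open_face k A U s"
proof -
  have "face_type_point k A U s \<in> polyhedron_of hypersimplex_normal (hypersimplex_bound k)"
    using face_type_point_witness(1)[OF assms]
    by (simp add: half_open_hypersimplex_eq hypersimplex_eq_polyhedron_of)
  then show ?thesis
    using mem_constraint_face_active face_type_point_witness[OF assms] by (metis IntI half_open_face_def)
qed

lemma face_meeting_half_open_hypersimplex:
  assumes F: "F face_of hypersimplex k" and meets: "F \<inter> half_open_hypersimplex k \<noteq> {}"
  obtains q where "q \<in> half_open_hypersimplex k" "F = hs_face k (hs_active k q)"
proof -
  obtain q where q: "q \<in> F" "F = hs_face k (hs_active k q)"
    using face_of_polyhedron_of_eq_constraint_face F meets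
    unfolding hypersimplex_eq_polyhedron_of by blast
  obtain x where x: "x \<in> F" "x \<in> half_open_hypersimplex k"
    using meets by blast
  \<comment> \<open>if the lower sum constraint were active at q, it would be tight on all of F, including x\<close>
  have "Sum_lower \<notin> hs_active k q"
  proof
    assume "Sum_lower \<in> hs_active k q"
    then have "Sum_lower \<in> hs_active k x"
      using x(1) q(2) unfolding constraint_face_def active_constraints_def by blast
    then show False
      using x(2) by (simp add: half_open_hypersimplex_eq)
  qed
  moreover have "q \<in> hypersimplex k"
    using q(1) F face_of_imp_subset by blast
  ultimately show ?thesis
    using that q(2) by (simp add: half_open_hypersimplex_eq)
qed

lemma half_open_faces_eq_image:
  "half_open_faces k j = (\<lambda>(A, U, s). half_open_face k A U s) ` face_types k j"
proof (intro set_eqI iffI)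
  fix G assume "G \<in> half_open_faces k j"
  then obtain F where F: "F face_of hypersimplex k" "aff_dim F = int j"
    and meets: "F \<inter> half_open_hypersimplex k \<noteq> {}" and G: "G = F \<inter> half_open_hypersimplex k"
    unfolding half_open_faces_def by blast
  then obtain q where q: "q \<in> half_open_hypersimplex k" "F = hs_face k (hs_active k q)"
    using face_meeting_half_open_hypersimplex by metis
  then obtain A U s where type: "face_type k A U s" and active: "hs_active k q = face_constraints A U s"
    using face_type_of_point[OF q(1)] active_constraints_half_open_hypersimplex[OF q(1)] by blast
  then have "aff_dim F = int (face_type_dim U s)"
    using q(2) aff_dim_hs_face[OF q(1)] by (simp add: face_type_def)
  then have "(A, U, s) \<in> face_types k j"
    using type F(2) by (simp add: face_types_def)
  moreover have "G = half_open_face k A U s"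
    using G q(2) active by (simp add: half_open_face_def)
  ultimately show "G \<in> (\<lambda>(A, U, s). half_open_face k A U s) ` face_types k j"
    by force
next
  fix G assume "G \<in> (\<lambda>(A, U, s). half_open_face k A U s) ` face_types k j"
  then obtain A U s where type: "face_type k A U s" and dim: "face_type_dim U s = j"
    and G: "G = half_open_face k A U s"
    by (auto simp: face_types_def)
  have "hs_face k (face_constraints A U s) face_of hypersimplex k"
    unfolding hypersimplex_eq_polyhedron_of by (rule constraint_face_face_of)
  moreover have "A \<inter> U = {}"
    using type by (simp add: face_type_def)
  then have "aff_dim (hs_face k (face_constraints A U s)) = int j"
    using aff_dim_hs_face[OF face_type_point_witness[OF type]] dim by simp
  moreover have "hs_face k (face_constraints A U s) \<inter> half_open_hypersimplex k \<noteq> {}"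
    using face_type_point_mem_half_open_face[OF type] by (auto simp: half_open_face_def)
  ultimately show "G \<in> half_open_faces k j"
    unfolding half_open_faces_def G half_open_face_def by blast
qed

lemma face_constraints_subset_if_half_open_face_subset:
  assumes "face_type k A U s" "half_open_face k A U s \<subseteq> half_open_face k A' U' s'"
  shows "face_constraints A' U' s' \<subseteq> face_constraints A U s"
proof -
  have "face_type_point k A U s \<in> hs_face k (face_constraints A' U' s')"
    using face_type_point_mem_half_open_face[OF assms(1)] assms(2) by (auto simp: half_open_face_def)
  then have "face_constraints A' U' s' \<subseteq> hs_active k (face_type_point k A U s)"
    by (auto simp: constraint_face_def active_constraints_def)
  then show ?thesis
    using face_type_point_witness(2)[OF assms(1)] by simp
qed

lemma half_open_face_eq_iff:
  assumes "face_type k A U s" "face_type k A' U' s'"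
  shows "half_open_face k A U s = half_open_face k A' U' s' \<longleftrightarrow> (A, U, s) = (A', U', s')"
proof
  assume eq: "half_open_face k A U s = half_open_face k A' U' s'"
  have "face_constraints A U s \<subseteq> face_constraints A' U' s'"
    using face_constraints_subset_if_half_open_face_subset[OF assms(2)] eq by simp
  moreover have "face_constraints A' U' s' \<subseteq> face_constraints A U s"
    using face_constraints_subset_if_half_open_face_subset[OF assms(1)] eq by simp
  ultimately have "face_constraints A U s = face_constraints A' U' s'"
    by (rule subset_antisym)
  then show "(A, U, s) = (A', U', s')"
    using assms face_constraints_inj[of A U A' U' s s'] by (simp add: face_type_def)
qed simp

lemma inj_on_half_open_face: "inj_on (\<lambda>(A, U, s). half_open_face k A U s) (face_types k j)"
proof (rule inj_onI)
  fix x y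
  assume "x \<in> face_types k j" "y \<in> face_types k j"
    and "(\<lambda>(A, U, s). half_open_face k A U s) x = (\<lambda>(A, U, s). half_open_face k A U s) y"
  moreover obtain A U s A' U' s' where "x = (A, U, s)" "y = (A', U', s')"
    by (cases x, cases y) auto
  ultimately show "x = y"
    using half_open_face_eq_iff[of k A U s A' U' s'] by (simp add: face_types_def)
qed

lemma card_half_open_faces:
  "card (half_open_faces k j :: (real ^ 'n::finite) set set) =
    card (face_types k j :: ('n set \<times> 'n set \<times> bool) set)"
  unfolding half_open_faces_eq_image by (rule card_image[OF inj_on_half_open_face])

section \<open>Counting\<close>

lemma card_disjoint_pairs:
  "card {(A :: 'n::finite set, U). A \<inter> U = {} \<and> card U = u \<and> card A = m}
     = (CARD('n) choose u) * ((CARD('n) - u) choose m)"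
proof -
  have "{(A :: 'n set, U). A \<inter> U = {} \<and> card U = u \<and> card A = m}
      = (\<lambda>(U, A). (A, U)) ` (SIGMA U:{U. card U = u}. {A. A \<subseteq> - U \<and> card A = m})"
    by (auto simp: image_iff)
  moreover have "inj_on (\<lambda>(U :: 'n set, A :: 'n set). (A, U)) X" for X
    by (auto simp: inj_on_def)
  moreover have "card {A. A \<subseteq> - U \<and> card A = m} = (CARD('n) - u) choose m"
    if "card U = u" for U :: "'n set"
  proof -
    have "card (- U) = CARD('n) - u"
      using that by (simp add: Compl_eq_Diff_UNIV card_Diff_subset)
    then show ?thesis
      using n_subsets[of "- U" m] by simp
  qed
  moreover have "card {U :: 'n set. card U = u} = CARD('n) choose u"
    using n_subsets[of "UNIV :: 'n set" u] by simp
  ultimately show ?thesis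
    by (simp add: card_image)
qed

lemma card_disjoint_pairs_card_in:
  assumes "finite M"
  shows "card {(A :: 'n::finite set, U). A \<inter> U = {} \<and> card U = u \<and> card A \<in> M}
     = (\<Sum>m\<in>M. (CARD('n) choose u) * ((CARD('n) - u) choose m))"
proof -
  have "{(A :: 'n set, U). A \<inter> U = {} \<and> card U = u \<and> card A \<in> M}
      = (\<Union>m\<in>M. {(A, U). A \<inter> U = {} \<and> card U = u \<and> card A = m})"
    by auto
  also have "card \<dots> = (\<Sum>m\<in>M. card {(A :: 'n set, U). A \<inter> U = {} \<and> card U = u \<and> card A = m})"
    using assms by (intro card_UN_disjoint) auto
  finally show ?thesis
    by (simp add: card_disjoint_pairs)
qed

lemma card_face_types_0: "card (face_types k 0 :: ('n::finite set \<times> 'n set \<times> bool) set) = CARD('n) choose k"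
proof -
  have "face_types k 0 = (\<lambda>A. (A, {}, True)) ` {A :: 'n set. card A = k}"
    by (auto simp: face_types_def face_type_def face_type_dim_def split: if_splits)
  moreover have "inj (\<lambda>A :: 'n set. (A, {} :: 'n set, True))"
    by (auto simp: inj_def)
  ultimately show ?thesis
    using n_subsets[of "UNIV :: 'n set" k] by (simp add: card_image inj_on_subset)
qed

lemma face_types_eq:
  assumes "1 \<le> j"
  shows "face_types k j =
    (\<lambda>(A, U). (A, U, False)) ` {(A, U). A \<inter> U = {} \<and> card U = j \<and> card A \<in> {k - j..<k}} \<union>
    (\<lambda>(A, U). (A, U, True)) ` {(A, U). A \<inter> U = {} \<and> card U = Suc j \<and> card A \<in> {k - j..<k}}"
  using assms by (auto simp: face_types_def face_type_def face_type_dim_def image_iff split: if_splits)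

lemma card_face_types:
  assumes "1 \<le> j"
  shows "card (face_types k j :: ('n::finite set \<times> 'n set \<times> bool) set) =
    (\<Sum>m\<in>{k - j..<k}. (CARD('n) choose j) * ((CARD('n) - j) choose m)
      + (CARD('n) choose Suc j) * ((CARD('n) - Suc j) choose m))"
proof -
  let ?P = "\<lambda>u. {(A :: 'n set, U). A \<inter> U = {} \<and> card U = u \<and> card A \<in> {k - j..<k}}"
  have inj: "inj_on (\<lambda>(A :: 'n set, U :: 'n set). (A, U, s)) X" for s X
    by (auto simp: inj_on_def)
  have "card (face_types k j :: ('n set \<times> 'n set \<times> bool) set) =
      card ((\<lambda>(A, U). (A, U, False)) ` ?P j) + card ((\<lambda>(A, U). (A, U, True)) ` ?P (Suc j))"
    unfolding face_types_eq[OF assms] by (rule card_Un_disjoint) auto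
  also have "\<dots> = card (?P j) + card (?P (Suc j))"
    by (simp only: card_image[OF inj])
  finally show ?thesis
    by (simp only: card_disjoint_pairs_card_in[OF finite_atLeastLessThan] sum.distrib)
qed

lemma binomial_product_sum_identity:
  "Suc n * ((n choose j) * ((n - j) choose m) + (n choose Suc j) * ((n - Suc j) choose m))
    = (Suc n choose Suc j) * ((n - j) choose m) * (Suc n - m)"
proof -
  let ?X = "(n choose j) * ((n - j) choose m) + (n choose Suc j) * ((n - Suc j) choose m)"
  have absorb1: "Suc j * (n choose Suc j) = (n - j) * (n choose j)"
    using binomial_absorption[of j n] binomial_absorb_comp[of n j] by simp
  have absorb2: "(n - j) * ((n - Suc j) choose m) = (n - j - m) * ((n - j) choose m)"
    using binomial_absorb_comp[of "n - j" m] by simp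
  have "Suc j * ?X = Suc j * ((n choose j) * ((n - j) choose m))
      + (Suc j * (n choose Suc j)) * ((n - Suc j) choose m)"
    by (simp only: add_mult_distrib2 mult.assoc)
  also have "\<dots> = Suc j * ((n choose j) * ((n - j) choose m))
      + (n choose j) * ((n - j) * ((n - Suc j) choose m))"
    by (simp only: absorb1 ac_simps)
  also have "\<dots> = Suc j * ((n choose j) * ((n - j) choose m))
      + (n choose j) * ((n - j - m) * ((n - j) choose m))"
    by (simp only: absorb2)
  also have "\<dots> = (n choose j) * ((n - j) choose m) * (Suc j + (n - j - m))"
    by (simp only: distrib_left ac_simps)
  also have "\<dots> = (n choose j) * ((n - j) choose m) * (Suc n - m)"
  proof (cases "j \<le> n \<and> m \<le> n - j")
    case True
    then have "Suc j + (n - j - m) = Suc n - m"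
      by arith
    then show ?thesis
      by (simp only:)
  qed (auto simp: binomial_eq_0)
  finally have eq: "Suc j * ?X = (n choose j) * ((n - j) choose m) * (Suc n - m)" .
  have "Suc j * (Suc n * ?X) = Suc n * (Suc j * ?X)"
    by (rule mult.left_commute)
  also have "\<dots> = (Suc n * (n choose j)) * ((n - j) choose m) * (Suc n - m)"
    by (simp only: eq mult.assoc)
  also have "\<dots> = Suc j * ((Suc n choose Suc j) * ((n - j) choose m) * (Suc n - m))"
    by (simp only: Suc_times_binomial_eq ac_simps)
  finally show ?thesis
    by (simp only: mult_cancel1 nat.simps simp_thms)
qed

lemma binomial_product_sum_identity_real:
  assumes "m \<le> n"
  shows "real ((n choose j) * ((n - j) choose m) + (n choose Suc j) * ((n - Suc j) choose m))
    = real (Suc n choose Suc j) * (real ((n - j) choose m) * (real n - real m + 1) / (real n + 1))"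
proof -
  have "real (Suc n) * real ((n choose j) * ((n - j) choose m) + (n choose Suc j) * ((n - Suc j) choose m))
      = real (Suc n choose Suc j) * real ((n - j) choose m) * real (Suc n - m)"
    using arg_cong[OF binomial_product_sum_identity[of n j m], of real] by (simp only: of_nat_mult)
  moreover have "real (Suc n - m) = real n - real m + 1"
    using assms by (simp add: of_nat_diff)
  ultimately show ?thesis
    by (simp add: field_simps)
qed

lemma int_interval_eq_image_int: "{max 0 (int k - int j)..int k - 1} = int ` {k - j..<k}"
proof (intro set_eqI iffI)
  fix x assume "x \<in> {max 0 (int k - int j)..int k - 1}"
  then have "x = int (nat x)" "nat x \<in> {k - j..<k}"
    by auto
  then show "x \<in> int ` {k - j..<k}"
    by blast
qed auto

theorem theorem1p2:
  fixes k :: nat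
  assumes "0 < k" and "k \<le> CARD('n::finite)"
  shows "(card (half_open_faces k 0 :: (real ^ 'n) set set) = CARD('n) choose k) \<and>
         (\<forall>j. 1 \<le> j \<and> j \<le> CARD('n) \<longrightarrow>
           real (card (half_open_faces k j :: (real ^ 'n) set set)) =
           real (Suc (CARD('n)) choose (j + 1)) *
           (\<Sum>s = max 0 (int k - int j) .. int k - 1.
              real (CARD('n) - j choose nat s) * (real CARD('n) - real_of_int s + 1) / (real CARD('n) + 1)))"
    (is "_ \<and> (\<forall>j. _ \<longrightarrow> ?faces j = ?formula j)")
proof -
  let ?n = "CARD('n)"
  have "?faces j = ?formula j" if "1 \<le> j" for j
  proof -
    have "?faces j = (\<Sum>m\<in>{k - j..<k}.
        real ((?n choose j) * ((?n - j) choose m) + (?n choose Suc j) * ((?n - Suc j) choose m)))"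
      using that by (simp add: card_half_open_faces card_face_types)
    also have "\<dots> = (\<Sum>m\<in>{k - j..<k}.
        real (Suc ?n choose Suc j) * (real ((?n - j) choose m) * (real ?n - real m + 1) / (real ?n + 1)))"
      using assms(2) by (intro sum.cong refl binomial_product_sum_identity_real) auto
    also have "\<dots> = ?formula j"
      by (simp add: int_interval_eq_image_int sum.reindex sum_distrib_left)
    finally show ?thesis .
  qed
  then show ?thesis
    by (simp add: card_half_open_faces card_face_types_0)
qed

end
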